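(* Let $\Omega\subset\mathbb{R}^{n+m}$ be a bounded Lipschitz domain and $s\in(0,1)$. Let \[ R_s=\max_{(x,y)\in\Omega}\ \min_{(z,w)\in\partial\Omega}\left(|x-z|^s+|y-w|^s\right). \] Then $\Lambda_\infty(s)=\dfrac1{R_s}$.
   Context: Points of $\mathbb{R}^{n+m}$ are $(x,y)$, $x\in\mathbb{R}^n$, $y\in\mathbb{R}^m$. \[ [u]_{\mathcal W^{s,\infty}(\mathbb{R}^{n+m})}=\max\left\{\sup_{(x,y)\ne(z,y)}\frac{|u(x,y)-u(z,y)|}{|x-z|^s};\ \sup_{(x,y)\ne(x,w)}\frac{|u(x,y)-u(x,w)|}{|y-w|^s}\right\}, \] $\mathcal W^{s,\infty}(\mathbb{R}^{n+m})=\{u\in L^\infty(\mathbb{R}^{n+m}):[u]_{\mathcal W^{s,\infty}(\mathbb{R}^{n+m})}<\infty\}$, and $\Lambda_\infty(s)=\inf\{[u]_{\mathcal W^{s,\infty}(\mathbb{R}^{n+m})}: u\in\mathcal W^{s,\infty}(\mathbb{R}^{n+m}),\ \|u\|_{L^\infty(\Omega)}=1,\ u=0\text{ in }\mathbb{R}^{n+m}\setminus\Omega\}$. *)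

theory Defs
  imports "HOL-Analysis.Analysis"
begin

text \<open>Points of R^(n+m) are pairs (x,y) with x in the euclidean space 'a (dimension n)
  and y in the euclidean space 'b (dimension m).\<close>

text \<open>Bounded Lipschitz domain: nonempty open connected set whose boundary is locally the
  (strict super-)graph of a Lipschitz function over a hyperplane, in suitably rotated
  coordinates (direction e = last coordinate axis after rotation).\<close>
definition lipschitz_domain :: "'c::euclidean_space set \<Rightarrow> bool" where
  "lipschitz_domain \<Omega> \<longleftrightarrow> open \<Omega> \<and> connected \<Omega> \<and> \<Omega> \<noteq> {} \<and>
     (\<forall>p\<in>frontier \<Omega>. \<exists>r>0. \<exists>e::'c. \<exists>g::'c \<Rightarrow> real. \<exists>L.
        norm e = 1 \<and> L-lipschitz_on {v. v \<bullet> e = 0} g \<and>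
        \<Omega> \<inter> ball p r = {q \<in> ball p r. q \<bullet> e > g (q - (q \<bullet> e) *\<^sub>R e)})"

definition holder_seminorm ::
    "real \<Rightarrow> ('a::euclidean_space \<times> 'b::euclidean_space \<Rightarrow> real) \<Rightarrow> ereal" where
  "holder_seminorm s u = max
     (SUP x. SUP y. SUP z \<in> -{x}. ereal (\<bar>u (x,y) - u (z,y)\<bar> / norm (x - z) powr s))
     (SUP x. SUP y. SUP w \<in> -{y}. ereal (\<bar>u (x,y) - u (x,w)\<bar> / norm (y - w) powr s))"

definition W_s_inf ::
    "real \<Rightarrow> ('a::euclidean_space \<times> 'b::euclidean_space \<Rightarrow> real) set" where
  "W_s_inf s = {u. bounded (range u) \<and> holder_seminorm s u < \<infinity>}"

definition Lambda_inf ::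
    "real \<Rightarrow> ('a::euclidean_space \<times> 'b::euclidean_space) set \<Rightarrow> ereal" where
  "Lambda_inf s \<Omega> = (INF u \<in> {u \<in> W_s_inf s. (SUP p\<in>\<Omega>. \<bar>u p\<bar>) = 1 \<and>
                                     (\<forall>p. p \<notin> \<Omega> \<longrightarrow> u p = 0)}. holder_seminorm s u)"

definition R_s :: "real \<Rightarrow> ('a::euclidean_space \<times> 'b::euclidean_space) set \<Rightarrow> real" where
  "R_s s \<Omega> = (SUP (x,y)\<in>\<Omega>. INF (z,w)\<in>frontier \<Omega>. norm (x - z) powr s + norm (y - w) powr s)"

end

theory Submission
  imports Defs
begin

text \<open>
  Measure distances in \<open>\<real>\<^sup>n \<times> \<real>\<^sup>m\<close> by \<open>\<rho>(p, q) = |x - z|\<^sup>s + |y - w|\<^sup>s\<close>; for \<open>0 < s \<le> 1\<close>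
  this satisfies the triangle inequality, since \<open>t \<mapsto> t\<^sup>s\<close> is subadditive. The seminorm
  \<open>[u]\<close> is exactly the best constant \<open>c\<close> with \<open>|u p - u q| \<le> c \<rho>(p, q)\<close>: passing from
  \<open>(x, y)\<close> to \<open>(z, w)\<close> through the corner \<open>(z, y)\<close> changes one variable at a time.
  Hence an admissible \<open>u\<close> satisfies \<open>|u p| \<le> [u] d(p)\<close>, where \<open>d\<close> is the \<open>\<rho>\<close>-distance to
  \<open>\<partial>\<Omega>\<close>, so \<open>1 \<le> [u] R\<^sub>s\<close>. Conversely \<open>d / R\<^sub>s\<close>, extended by zero, is admissible with
  seminorm at most \<open>1 / R\<^sub>s\<close>: being a distance function it is \<open>1\<close>-Lipschitz for \<open>\<rho>\<close>, also
  across \<open>\<partial>\<Omega>\<close>, because every segment from \<open>\<Omega>\<close> to its complement meets \<open>\<partial>\<Omega>\<close>.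
\<close>

lemma powr_add_le_add_powr:
  fixes a b s :: real
  assumes "0 \<le> a" "0 \<le> b" "0 < s" "s \<le> 1"
  shows "(a + b) powr s \<le> a powr s + b powr s"
proof (cases "a + b = 0")
  case True
  then show ?thesis using assms by auto
next
  case False
  hence ab: "a + b > 0" using assms by linarith
  have le_powr: "t \<le> t powr s" if "0 \<le> t" "t \<le> 1" for t :: real
  proof (cases "t = 0")
    case False
    hence "t powr 1 \<le> t powr s" using that assms by (intro powr_mono') auto
    thus ?thesis using False that by simp
  qed simp
  define t where "t = a / (a + b)"
  have t01: "0 \<le> t" "t \<le> 1" using assms ab by (auto simp: t_def field_simps)
  have "a = t * (a + b)" "b = (1 - t) * (a + b)" using ab by (auto simp: t_def field_simps)
  hence "a powr s + b powr s = (t powr s + (1 - t) powr s) * (a + b) powr s"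
    using t01 ab by (metis distrib_right less_eq_real_def powr_mult diff_ge_0_iff_ge)
  also have "\<dots> \<ge> 1 * (a + b) powr s"
    using le_powr[of t] le_powr[of "1 - t"] t01 by (intro mult_right_mono) auto
  finally show ?thesis by simp
qed

lemma norm_diff_powr_triangle:
  fixes x y z :: "'a::real_normed_vector"
  assumes "0 < s" "s \<le> 1"
  shows "norm (x - z) powr s \<le> norm (x - y) powr s + norm (y - z) powr s"
proof -
  have "norm (x - z) powr s \<le> (norm (x - y) + norm (y - z)) powr s"
    using assms by (intro powr_mono2) (auto intro: norm_diff_triangle_le)
  also have "\<dots> \<le> norm (x - y) powr s + norm (y - z) powr s"
    using assms by (intro powr_add_le_add_powr) auto
  finally show ?thesis .
qed

definition holder_dist ::
    "real \<Rightarrow> ('a::real_normed_vector \<times> 'b::real_normed_vector) \<Rightarrow> 'a \<times> 'b \<Rightarrow> real" where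
  "holder_dist s p q = norm (fst p - fst q) powr s + norm (snd p - snd q) powr s"

lemma holder_dist_nonneg: "0 \<le> holder_dist s p q"
  by (simp add: holder_dist_def)

lemma holder_dist_commute: "holder_dist s p q = holder_dist s q p"
  by (simp add: holder_dist_def norm_minus_commute)

lemma holder_dist_triangle:
  assumes "0 < s" "s \<le> 1"
  shows "holder_dist s p r \<le> holder_dist s p q + holder_dist s q r"
  using norm_diff_powr_triangle[OF assms, of "fst p" "fst r" "fst q"]
        norm_diff_powr_triangle[OF assms, of "snd p" "snd r" "snd q"]
  by (simp add: holder_dist_def)

lemma holder_dist_segment_le:
  assumes "r \<in> closed_segment p q" "0 \<le> s"
  shows "holder_dist s p r \<le> holder_dist s p q"
proof -
  obtain u :: real where u: "0 \<le> u" "u \<le> 1" "r = (1 - u) *\<^sub>R p + u *\<^sub>R q"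
    using assms(1) by (auto simp: in_segment)
  have "fst p - fst r = u *\<^sub>R (fst p - fst q)" "snd p - snd r = u *\<^sub>R (snd p - snd q)"
    unfolding u(3) by (simp_all add: algebra_simps)
  hence "norm (fst p - fst r) \<le> norm (fst p - fst q)" "norm (snd p - snd r) \<le> norm (snd p - snd q)"
    using u by (auto intro: mult_left_le_one_le)
  thus ?thesis
    unfolding holder_dist_def using assms(2) by (intro add_mono powr_mono2) auto
qed

lemma holder_dist_le_norm_powr:
  assumes "0 \<le> s"
  shows "holder_dist s p q \<le> 2 * norm (p - q) powr s"
proof -
  have "norm (fst p - fst q) \<le> norm (p - q)" "norm (snd p - snd q) \<le> norm (p - q)"
    using norm_fst_le[of "fst p - fst q" "snd p - snd q"] norm_snd_le[of "snd p - snd q" "fst p - fst q"]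
    by (cases p, cases q, simp)+
  thus ?thesis
    unfolding holder_dist_def using assms by (smt (verit) norm_ge_zero powr_mono2)
qed

lemma half_norm_powr_le_holder_dist:
  assumes "0 \<le> s"
  shows "(norm (p - q) / 2) powr s \<le> holder_dist s p q"
proof -
  have "norm (p - q) \<le> norm (fst p - fst q) + norm (snd p - snd q)"
    using norm_Pair_le[of "fst p - fst q" "snd p - snd q"] by (cases p, cases q) simp
  hence "norm (p - q) / 2 \<le> norm (fst p - fst q) \<or> norm (p - q) / 2 \<le> norm (snd p - snd q)"
    by linarith
  thus ?thesis
    unfolding holder_dist_def using assms
    by (smt (verit) norm_ge_zero powr_ge_zero powr_mono2 zero_le_divide_iff)
qed

definition frontier_holder_dist ::
    "real \<Rightarrow> ('a::real_normed_vector \<times> 'b::real_normed_vector) set \<Rightarrow> 'a \<times> 'b \<Rightarrow> real" where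
  "frontier_holder_dist s \<Omega> p = (INF q\<in>frontier \<Omega>. holder_dist s p q)"

lemma frontier_holder_dist_le:
  "q \<in> frontier \<Omega> \<Longrightarrow> frontier_holder_dist s \<Omega> p \<le> holder_dist s p q"
  unfolding frontier_holder_dist_def
  by (intro cINF_lower bdd_belowI[of _ 0]) (auto simp: holder_dist_nonneg)

lemma le_frontier_holder_dist:
  "frontier \<Omega> \<noteq> {} \<Longrightarrow> (\<And>q. q \<in> frontier \<Omega> \<Longrightarrow> c \<le> holder_dist s p q)
    \<Longrightarrow> c \<le> frontier_holder_dist s \<Omega> p"
  unfolding frontier_holder_dist_def by (rule cINF_greatest)

lemma frontier_holder_dist_nonneg:
  "frontier \<Omega> \<noteq> {} \<Longrightarrow> 0 \<le> frontier_holder_dist s \<Omega> p"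
  by (rule le_frontier_holder_dist) (auto simp: holder_dist_nonneg)

lemma frontier_holder_dist_le_add:
  assumes "frontier \<Omega> \<noteq> {}" "0 < s" "s \<le> 1"
  shows "frontier_holder_dist s \<Omega> p \<le> holder_dist s p q + frontier_holder_dist s \<Omega> q"
proof -
  have "frontier_holder_dist s \<Omega> p - holder_dist s p q \<le> frontier_holder_dist s \<Omega> q"
  proof (rule le_frontier_holder_dist[OF assms(1)])
    fix r assume "r \<in> frontier \<Omega>"
    thus "frontier_holder_dist s \<Omega> p - holder_dist s p q \<le> holder_dist s q r"
      using frontier_holder_dist_le[of r \<Omega> s p] holder_dist_triangle[OF assms(2,3), of p r q]
      by simp
  qed
  thus ?thesis by simp
qed

lemma frontier_holder_dist_le_outside:
  assumes "p \<in> \<Omega>" "q \<notin> \<Omega>" "0 \<le> s"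
  shows "frontier_holder_dist s \<Omega> p \<le> holder_dist s p q"
proof -
  have "closed_segment p q \<inter> frontier \<Omega> \<noteq> {}"
    using assms by (intro connected_Int_frontier) auto
  then obtain r where "r \<in> closed_segment p q" "r \<in> frontier \<Omega>" by blast
  thus ?thesis
    using frontier_holder_dist_le holder_dist_segment_le assms(3) by (metis order.trans)
qed

lemma frontier_holder_dist_pos:
  assumes "open \<Omega>" "p \<in> \<Omega>" "frontier \<Omega> \<noteq> {}" "0 \<le> s"
  shows "0 < frontier_holder_dist s \<Omega> p"
proof -
  obtain e where e: "e > 0" "ball p e \<subseteq> \<Omega>" using assms(1,2) open_contains_ball by blast
  have "(e / 2) powr s \<le> frontier_holder_dist s \<Omega> p"
  proof (rule le_frontier_holder_dist[OF assms(3)])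
    fix q assume "q \<in> frontier \<Omega>"
    hence "q \<notin> ball p e" using e assms(1) by (auto simp: frontier_def interior_open)
    hence "e / 2 \<le> norm (p - q) / 2" by (simp add: dist_norm)
    thus "(e / 2) powr s \<le> holder_dist s p q"
      using half_norm_powr_le_holder_dist[OF assms(4), of p q] e(1) assms(4)
      by (meson order.trans powr_mono2 less_imp_le half_gt_zero)
  qed
  moreover have "0 < (e / 2) powr s" using e by simp
  ultimately show ?thesis by linarith
qed

lemma bdd_above_frontier_holder_dist:
  assumes "bounded \<Omega>" "0 \<le> s"
  shows "bdd_above (frontier_holder_dist s \<Omega> ` \<Omega>)"
proof (cases "frontier \<Omega> = {}")
  case True
  thus ?thesis by (auto simp: frontier_holder_dist_def intro: bdd_aboveI)
next
  case False
  then obtain q where q: "q \<in> frontier \<Omega>" by blast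
  obtain B where B: "\<And>x. x \<in> closure \<Omega> \<Longrightarrow> norm x \<le> B"
    using bounded_closure[OF assms(1)] by (auto simp: bounded_iff)
  have "frontier_holder_dist s \<Omega> p \<le> 2 * (2 * B) powr s" if "p \<in> \<Omega>" for p
  proof -
    have "p \<in> closure \<Omega>" "q \<in> closure \<Omega>"
      using that q closure_subset by (auto simp: frontier_def)
    hence "norm p \<le> B" "norm q \<le> B" using B by blast+
    hence "norm (p - q) \<le> 2 * B" using norm_triangle_ineq4[of p q] by linarith
    hence "holder_dist s p q \<le> 2 * (2 * B) powr s"
      using holder_dist_le_norm_powr[OF assms(2), of p q] assms(2)
      by (smt (verit) norm_ge_zero powr_mono2)
    thus ?thesis using frontier_holder_dist_le[OF q, of s p] by linarith
  qed
  thus ?thesis by (intro bdd_aboveI2) blast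
qed

lemma cSUP_divide_const:
  fixes f :: "'a \<Rightarrow> real"
  assumes "A \<noteq> {}" "bdd_above (f ` A)" "0 < c"
  shows "(SUP x\<in>A. f x / c) = (SUP x\<in>A. f x) / c"
proof (rule antisym)
  show "(SUP x\<in>A. f x / c) \<le> (SUP x\<in>A. f x) / c"
    using assms by (intro cSUP_least divide_right_mono cSUP_upper) auto
  obtain M where "\<And>x. x \<in> A \<Longrightarrow> f x \<le> M" using assms(2) by (auto simp: bdd_above_def)
  hence "bdd_above ((\<lambda>x. f x / c) ` A)"
    using assms(3) by (intro bdd_aboveI2[of _ _ "M / c"]) (simp add: divide_right_mono)
  hence "f x \<le> (SUP x\<in>A. f x / c) * c" if "x \<in> A" for x
    using cSUP_upper[OF that, of "\<lambda>x. f x / c"] assms(3) by (simp add: divide_le_eq)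
  thus "(SUP x\<in>A. f x) / c \<le> (SUP x\<in>A. f x / c)"
    using assms(1,3) by (simp add: divide_le_eq cSUP_least)
qed
lemma R_s_eq_SUP_frontier_holder_dist:
  "R_s s \<Omega> = (SUP p\<in>\<Omega>. frontier_holder_dist s \<Omega> p)"
  unfolding R_s_def frontier_holder_dist_def holder_dist_def by (simp add: split_def)

lemma abs_diff_le_holder_seminorm:
  assumes "holder_seminorm s u \<le> ereal c"
  shows "\<bar>u p - u q\<bar> \<le> c * holder_dist s p q"
proof -
  have quot: "\<bar>v\<bar> \<le> c * t" if "ereal (\<bar>v\<bar> / t) \<le> holder_seminorm s u" "0 < t" for v t
    using order.trans[OF that(1) assms] that(2) by (simp add: field_simps)
  have x: "\<bar>u (x, y) - u (z, y)\<bar> \<le> c * norm (x - z) powr s" for x z y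
  proof (cases "z = x")
    case False
    have "ereal (\<bar>u (x, y) - u (z, y)\<bar> / norm (x - z) powr s) \<le> holder_seminorm s u"
      unfolding holder_seminorm_def using False
      by (intro max.coboundedI1 SUP_upper2[of x] SUP_upper2[of y] SUP_upper) auto
    thus ?thesis using False by (intro quot) auto
  qed simp
  have y: "\<bar>u (x, y) - u (x, w)\<bar> \<le> c * norm (y - w) powr s" for x y w
  proof (cases "w = y")
    case False
    have "ereal (\<bar>u (x, y) - u (x, w)\<bar> / norm (y - w) powr s) \<le> holder_seminorm s u"
      unfolding holder_seminorm_def using False
      by (intro max.coboundedI2 SUP_upper2[of x] SUP_upper2[of y] SUP_upper) auto
    thus ?thesis using False by (intro quot) auto
  qed simp
  obtain x y z w where pq: "p = (x, y)" "q = (z, w)" by (cases p, cases q)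
  have "\<bar>u p - u q\<bar> \<le> \<bar>u (x, y) - u (z, y)\<bar> + \<bar>u (z, y) - u (z, w)\<bar>"
    unfolding pq by linarith
  also have "\<dots> \<le> c * norm (x - z) powr s + c * norm (y - w) powr s"
    using x y by (rule add_mono)
  finally show ?thesis by (simp add: pq holder_dist_def distrib_left)
qed

lemma holder_seminorm_le:
  assumes "\<And>p q. \<bar>u p - u q\<bar> \<le> c * holder_dist s p q"
  shows "holder_seminorm s u \<le> ereal c"
proof -
  have quot: "\<bar>v\<bar> / t \<le> c" if "\<bar>v\<bar> \<le> c * t" "0 < t" for v t
    using that by (simp add: field_simps)
  \<comment> \<open>For points differing in one variable \<open>holder_dist\<close> is the single power, as \<open>0 powr s = 0\<close>.\<close>
  show ?thesis
    unfolding holder_seminorm_def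
    using assms[of "(x, y)" "(z, y)" for x y z] assms[of "(x, y)" "(x, w)" for x y w]
    by (intro max.boundedI SUP_least) (auto intro!: quot simp: holder_dist_def)
qed

lemma holder_seminorm_nonneg: "0 \<le> holder_seminorm s u"
proof -
  obtain b :: 'a where b: "b \<in> Basis" using nonempty_Basis by blast
  hence "ereal (\<bar>u (0, 0) - u (b, 0)\<bar> / norm (0 - b) powr s) \<le> holder_seminorm s u"
    unfolding holder_seminorm_def using nonzero_Basis[of b]
    by (intro max.coboundedI1 SUP_upper2[of 0] SUP_upper2[of 0] SUP_upper) auto
  thus ?thesis by (rule order.trans[rotated]) simp
qed

definition admissible ::
    "real \<Rightarrow> ('a::euclidean_space \<times> 'b::euclidean_space) set \<Rightarrow> ('a \<times> 'b \<Rightarrow> real) set" where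
  "admissible s \<Omega> = {u \<in> W_s_inf s. (SUP p\<in>\<Omega>. \<bar>u p\<bar>) = 1 \<and> (\<forall>p. p \<notin> \<Omega> \<longrightarrow> u p = 0)}"

lemma Lambda_inf_eq_INF_admissible:
  "Lambda_inf s \<Omega> = (INF u\<in>admissible s \<Omega>. holder_seminorm s u)"
  unfolding Lambda_inf_def admissible_def ..

lemma abs_le_frontier_holder_dist:
  assumes "open \<Omega>" "frontier \<Omega> \<noteq> {}" "0 \<le> c" "p \<in> \<Omega>"
    and lip: "\<And>p q. \<bar>u p - u q\<bar> \<le> c * holder_dist s p q"
    and zero: "\<And>q. q \<notin> \<Omega> \<Longrightarrow> u q = 0"
  shows "\<bar>u p\<bar> \<le> c * frontier_holder_dist s \<Omega> p"
proof (cases "c = 0")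
  case True
  obtain q where "q \<in> frontier \<Omega>" using assms(2) by blast
  hence "u q = 0" using zero assms(1) by (auto simp: frontier_def interior_open)
  thus ?thesis using lip[of p q] True by simp
next
  case False
  have "\<bar>u p\<bar> / c \<le> frontier_holder_dist s \<Omega> p"
  proof (rule le_frontier_holder_dist[OF assms(2)])
    fix q assume "q \<in> frontier \<Omega>"
    hence "u q = 0" using zero assms(1) by (auto simp: frontier_def interior_open)
    thus "\<bar>u p\<bar> / c \<le> holder_dist s p q"
      using lip[of p q] False assms(3) by (simp add: field_simps)
  qed
  thus ?thesis using False assms(3) by (simp add: field_simps)
qed

lemma frontier_holder_dist_le_R_s:
  assumes "bounded \<Omega>" "0 \<le> s" "p \<in> \<Omega>"
  shows "frontier_holder_dist s \<Omega> p \<le> R_s s \<Omega>"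
  unfolding R_s_eq_SUP_frontier_holder_dist
  using bdd_above_frontier_holder_dist[OF assms(1,2)] assms(3) by (rule cSUP_upper2) simp

lemma R_s_pos:
  assumes "open \<Omega>" "bounded \<Omega>" "\<Omega> \<noteq> {}" "frontier \<Omega> \<noteq> {}" "0 \<le> s"
  shows "0 < R_s s \<Omega>"
proof -
  obtain p where p: "p \<in> \<Omega>" using assms(3) by blast
  show ?thesis
    using frontier_holder_dist_pos[OF assms(1) p assms(4,5)]
          frontier_holder_dist_le_R_s[OF assms(2,5) p] by linarith
qed

lemma inverse_R_s_le_holder_seminorm:
  assumes "open \<Omega>" "bounded \<Omega>" "frontier \<Omega> \<noteq> {}" "0 \<le> s" "0 < R_s s \<Omega>"
    and u: "u \<in> admissible s \<Omega>"
  shows "ereal (1 / R_s s \<Omega>) \<le> holder_seminorm s u"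
proof -
  have sup: "(SUP p\<in>\<Omega>. \<bar>u p\<bar>) = 1" and zero: "\<And>q. q \<notin> \<Omega> \<Longrightarrow> u q = 0"
    and finite: "holder_seminorm s u < \<infinity>"
    using u by (auto simp: admissible_def W_s_inf_def)
  obtain h where h: "holder_seminorm s u = ereal h" "0 \<le> h"
    using finite holder_seminorm_nonneg[of s u] by (cases "holder_seminorm s u") auto
  have lip: "\<bar>u p - u q\<bar> \<le> h * holder_dist s p q" for p q
    using h(1) by (intro abs_diff_le_holder_seminorm) simp
  have "\<bar>u p\<bar> \<le> h * R_s s \<Omega>" if "p \<in> \<Omega>" for p
  proof -
    have "\<bar>u p\<bar> \<le> h * frontier_holder_dist s \<Omega> p"
      using abs_le_frontier_holder_dist[OF assms(1,3) h(2) that lip zero] .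
    also have "\<dots> \<le> h * R_s s \<Omega>"
      using frontier_holder_dist_le_R_s[OF assms(2,4) that] h(2) by (rule mult_left_mono)
    finally show ?thesis .
  qed
  hence "(SUP p\<in>\<Omega>. \<bar>u p\<bar>) \<le> h * R_s s \<Omega>"
    using assms(3) by (intro cSUP_least) auto
  thus ?thesis using sup h(1) assms(5) by (simp add: field_simps)
qed

lemma abs_diff_zero_extension_frontier_holder_dist_le:
  fixes \<Omega> :: "('a::real_normed_vector \<times> 'b::real_normed_vector) set"
  assumes "frontier \<Omega> \<noteq> {}" "0 < s" "s \<le> 1"
  defines "d \<equiv> \<lambda>p. if p \<in> \<Omega> then frontier_holder_dist s \<Omega> p else 0"
  shows "\<bar>d p - d q\<bar> \<le> holder_dist s p q"
proof -
  have out: "frontier_holder_dist s \<Omega> p \<le> holder_dist s p q" if "p \<in> \<Omega>" "q \<notin> \<Omega>" for p q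
    using frontier_holder_dist_le_outside[OF that] assms(2) by simp
  consider "p \<in> \<Omega>" "q \<in> \<Omega>" | "p \<in> \<Omega>" "q \<notin> \<Omega>" | "p \<notin> \<Omega>" "q \<in> \<Omega>" | "p \<notin> \<Omega>" "q \<notin> \<Omega>"
    by blast
  thus ?thesis
  proof cases
    case 1
    thus ?thesis
      using frontier_holder_dist_le_add[OF assms(1-3), of p q]
            frontier_holder_dist_le_add[OF assms(1-3), of q p] holder_dist_commute[of s p q]
      by (simp add: d_def)
  next
    case 2
    thus ?thesis using out[of p q] frontier_holder_dist_nonneg[OF assms(1)] by (simp add: d_def)
  next
    case 3
    thus ?thesis
      using out[of q p] frontier_holder_dist_nonneg[OF assms(1)] holder_dist_commute[of s p q]
      by (simp add: d_def)
  qed (simp add: d_def holder_dist_nonneg)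
qed

lemma admissible_with_holder_seminorm_le_inverse_R_s:
  assumes "open \<Omega>" "bounded \<Omega>" "\<Omega> \<noteq> {}" "frontier \<Omega> \<noteq> {}" "0 < s" "s \<le> 1"
  obtains u where "u \<in> admissible s \<Omega>" "holder_seminorm s u \<le> ereal (1 / R_s s \<Omega>)"
proof -
  define R where "R = R_s s \<Omega>"
  define d where "d p = (if p \<in> \<Omega> then frontier_holder_dist s \<Omega> p else 0)" for p
  define u where "u p = d p / R" for p
  have R: "0 < R" using R_s_pos[OF assms(1-4)] assms(5) by (simp add: R_def)
  have d0R: "0 \<le> d p" "d p \<le> R" for p
    using frontier_holder_dist_nonneg[OF assms(4)] frontier_holder_dist_le_R_s[OF assms(2)] assms(5) R
    by (auto simp: d_def R_def)
  have "\<bar>d p - d q\<bar> \<le> holder_dist s p q" for p q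
    unfolding d_def by (rule abs_diff_zero_extension_frontier_holder_dist_le[OF assms(4-6)])
  moreover have "\<bar>u p - u q\<bar> = \<bar>d p - d q\<bar> / R" for p q
    using R by (simp add: u_def flip: diff_divide_distrib)
  ultimately have "\<bar>u p - u q\<bar> \<le> 1 / R * holder_dist s p q" for p q
    using R by (simp add: divide_right_mono)
  hence H: "holder_seminorm s u \<le> ereal (1 / R)" by (rule holder_seminorm_le)
  have u01: "\<bar>u p\<bar> \<le> 1" for p
    using d0R[of p] R by (simp add: u_def)
  have "(SUP p\<in>\<Omega>. \<bar>u p\<bar>) = (SUP p\<in>\<Omega>. frontier_holder_dist s \<Omega> p / R)"
    using frontier_holder_dist_nonneg[OF assms(4)] R by (intro SUP_cong) (simp_all add: u_def d_def)
  also have "\<dots> = R / R"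
    using cSUP_divide_const[OF assms(3) bdd_above_frontier_holder_dist[OF assms(2)] R] assms(5)
    by (simp add: R_def R_s_eq_SUP_frontier_holder_dist)
  finally have "(SUP p\<in>\<Omega>. \<bar>u p\<bar>) = 1" using R by simp
  moreover have "bounded (range u)" using u01 by (auto simp: bounded_real)
  moreover have "u p = 0" if "p \<notin> \<Omega>" for p using that by (simp add: u_def d_def)
  ultimately have "u \<in> admissible s \<Omega>"
    using H by (auto simp: admissible_def W_s_inf_def intro: le_less_trans)
  thus ?thesis using that H by (simp add: R_def)
qed

theorem lemma5p1:
  fixes \<Omega> :: "('a::euclidean_space \<times> 'b::euclidean_space) set" and s :: real
  assumes "lipschitz_domain \<Omega>" and "bounded \<Omega>" and "0 < s" and "s < 1"
  shows "Lambda_inf s \<Omega> = ereal (1 / R_s s \<Omega>)"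
proof -
  have "open \<Omega>" "\<Omega> \<noteq> {}" using assms(1) by (auto simp: lipschitz_domain_def)
  moreover have "frontier \<Omega> \<noteq> {}"
    using \<open>\<Omega> \<noteq> {}\<close> assms(2) not_bounded_UNIV frontier_not_empty by metis
  ultimately have R: "0 < R_s s \<Omega>" using R_s_pos[of \<Omega> s] assms(2,3) by simp
  obtain u where "u \<in> admissible s \<Omega>" "holder_seminorm s u \<le> ereal (1 / R_s s \<Omega>)"
    using admissible_with_holder_seminorm_le_inverse_R_s \<open>open \<Omega>\<close> \<open>\<Omega> \<noteq> {}\<close>
      \<open>frontier \<Omega> \<noteq> {}\<close> assms(2-4) by (metis less_imp_le)
  hence "Lambda_inf s \<Omega> \<le> ereal (1 / R_s s \<Omega>)"
    unfolding Lambda_inf_eq_INF_admissible by (auto intro: INF_lower2)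
  moreover have "ereal (1 / R_s s \<Omega>) \<le> Lambda_inf s \<Omega>"
    unfolding Lambda_inf_eq_INF_admissible
    using \<open>open \<Omega>\<close> \<open>frontier \<Omega> \<noteq> {}\<close> assms(2,3) R
    by (intro INF_greatest inverse_R_s_le_holder_seminorm) auto
  ultimately show ?thesis by (rule antisym)
qed

end
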